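(* Consider the two systems of ODEs for scalar functions $p(z),q(z)$: \[ \text{(I)}\quad p'''= 6pp'+3q'+zp'+2p,\qquad q'''= 12pq'+6p'p''+3p''+4zq'-2q, \] \[ \text{(II)}\quad p'''= 3pp'+3q'+zp'+2p,\qquad q'''= 12pq'+6p'q+3p''+4zq'-2q. \] Each of the systems (I) and (II) possesses formal Laurent series solutions of the form \[ p=\sum_{i=-2}^{\infty}\alpha_i(z-a)^i,\qquad q=\sum_{i=-4}^{\infty}\beta_i(z-a)^i \] depending on six arbitrary parameters.
   Context: Primes denote derivatives with respect to $z$. The parameter count includes the pole position $a$. *)

theory Defs
  imports Complex_Main "HOL-Computational_Algebra.Formal_Laurent_Series"
begin

text \<open>Formal Laurent series are taken in the local variable t = z - a; the independent
  variable z is then the series a + t, and d/dz = d/dt (fls_deriv).\<close>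

definition zvar :: "complex \<Rightarrow> complex fls" where
  "zvar a = fls_const a + fls_X"

abbreviation D :: "complex fls \<Rightarrow> complex fls" where
  "D f \<equiv> fls_deriv f"

definition sysI :: "complex \<Rightarrow> complex fls \<Rightarrow> complex fls \<Rightarrow> bool" where
  "sysI a p q \<longleftrightarrow>
     D (D (D p)) = 6 * p * D p + 3 * D q + zvar a * D p + 2 * p \<and>
     D (D (D q)) = 12 * p * D q + 6 * D p * D (D p) + 3 * D (D p) + 4 * zvar a * D q - 2 * q"

definition sysII :: "complex \<Rightarrow> complex fls \<Rightarrow> complex fls \<Rightarrow> bool" where
  "sysII a p q \<longleftrightarrow>
     D (D (D p)) = 3 * p * D p + 3 * D q + zvar a * D p + 2 * p \<and>
     D (D (D q)) = 12 * p * D q + 6 * D p * q + 3 * D (D p) + 4 * zvar a * D q - 2 * q"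

definition laurent_shape :: "complex fls \<Rightarrow> complex fls \<Rightarrow> bool" where
  "laurent_shape p q \<longleftrightarrow>
     (\<forall>i < -2. fls_nth p i = 0) \<and> (\<forall>i < -4. fls_nth q i = 0) \<and> fls_nth p (-2) \<noteq> 0"

definition coeff_at :: "complex fls \<Rightarrow> complex fls \<Rightarrow> bool \<times> int \<Rightarrow> complex" where
  "coeff_at p q k = (if fst k then fls_nth p (snd k) else fls_nth q (snd k))"

text \<open>Six-parameter family of formal Laurent solutions: the pole position a is arbitrary,
  and there are five distinct coefficient positions whose values can be prescribed
  arbitrarily.\<close>
definition six_param_laurent :: "(complex \<Rightarrow> complex fls \<Rightarrow> complex fls \<Rightarrow> bool) \<Rightarrow> bool" where
  "six_param_laurent S \<longleftrightarrow>
     (\<exists>ks :: (bool \<times> int) list. length ks = 5 \<and> distinct ks \<and>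
        (\<forall>a :: complex. \<forall>cs :: complex list. length cs = 5 \<longrightarrow>
           (\<exists>p q. S a p q \<and> laurent_shape p q \<and>
                  (\<forall>j < 5. coeff_at p q (ks ! j) = cs ! j))))"

end

(*
  Write t = z - a and give the coefficient alpha_i of p weight i and the coefficient beta_i
  of q weight i + 2.  The coefficient of t^(k-3) in the p-equation and of t^(k-5) in the
  q-equation only involve coefficients of weight at most k, and the two of weight exactly k,
  alpha_k and beta_(k-2), enter linearly through a 2x2 matrix depending only on k and on the
  leading coefficients.  Its determinant is (k+3)(k-1)(k-2)^2(k-4)(k-6) for (I) and
  (k+3)k(k-1)(k-2)(k-4)(k-8) for (II).  Past the largest root all coefficients are therefore
  determined one weight at a time, and the successive approximations converge coefficientwise.
  Below it an explicit truncated solution is given whose coefficients at the five nonnegative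
  roots (the resonances) are free, the compatibility conditions holding identically; the root
  k = -3 accounts for the pole position a.
*)
theory Submission
  imports Defs
begin

unbundle fps_syntax

definition vanishes_below :: "'a::zero fls \<Rightarrow> int \<Rightarrow> bool" where
  "vanishes_below f L \<longleftrightarrow> (\<forall>i<L. f $$ i = 0)"

lemma vanishes_belowD: "vanishes_below f L \<Longrightarrow> i < L \<Longrightarrow> f $$ i = 0"
  by (simp add: vanishes_below_def)

lemma vanishes_below_diffD:
  fixes f g :: "'a::ab_group_add fls"
  shows "vanishes_below (f - g) L \<Longrightarrow> i < L \<Longrightarrow> f $$ i = g $$ i"
  by (simp add: vanishes_below_def)

lemma fls_times_nth_vanishes_below:
  fixes f g :: "'a::comm_ring_1 fls"
  assumes f: "vanishes_below f L" and g: "vanishes_below g M"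
  shows "(f * g) $$ n = (\<Sum>i=L..n-M. f $$ i * g $$ (n - i))"
proof (cases "f = 0 \<or> g = 0")
  case True
  then show ?thesis by auto
next
  case False
  have L: "L \<le> fls_subdegree f" and M: "M \<le> fls_subdegree g"
    using False f g by (auto intro!: fls_subdegree_geI simp: vanishes_below_def)
  have "(f * g) $$ n = (\<Sum>i=fls_subdegree f..n - fls_subdegree g. f $$ i * g $$ (n - i))"
    by (rule fls_times_nth(2))
  also have "\<dots> = (\<Sum>i=L..n-M. f $$ i * g $$ (n - i))"
    using L M by (intro sum.mono_neutral_left) (auto simp: nth_less_subdegree_zero)
  finally show ?thesis .
qed

lemma stabilizing_fls_sequence_limit:
  fixes f :: "nat \<Rightarrow> 'a::ab_group_add fls"
  assumes bounded: "\<And>m. vanishes_below (f m) L"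
    and stable: "\<And>m. vanishes_below (f (Suc m) - f m) (c + int m)"
  obtains g where "\<And>m. vanishes_below (g - f m) (c + int m)"
proof -
  have later: "vanishes_below (f (m + n) - f m) (c + int m)" for m n
  proof (induction n)
    case (Suc n)
    then show ?case
      using stable[of "m + n"] by (auto simp: vanishes_below_def algebra_simps)
  qed (simp add: vanishes_below_def)
  have agree: "f m $$ i = f n $$ i" if "i < c + int m" "i < c + int n" for m n i
    using later[of m "n - m"] later[of n "m - n"] that
    by (cases "m \<le> n") (auto simp: vanishes_below_def)
  define g where "g = Abs_fls (\<lambda>i. f (nat (i - c + 1)) $$ i)"
  have g_nth: "g $$ i = f (nat (i - c + 1)) $$ i" for i
    unfolding g_def using bounded by (intro nth_Abs_fls_lower_bound) (auto simp: vanishes_below_def)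
  have "vanishes_below (g - f m) (c + int m)" for m
    by (auto simp: vanishes_below_def g_nth intro: agree)
  then show thesis by (rule that)
qed

lemma sum_int_interval_unroll: "a \<le> b \<Longrightarrow> sum f {a..b::int} = f a + sum f {a+1..b}"
proof -
  assume "a \<le> b"
  then have "{a..b} = insert a {a+1..b}" by auto
  then show ?thesis by simp
qed

definition fls_monom :: "'a::semiring_1 \<Rightarrow> int \<Rightarrow> 'a fls" where
  "fls_monom c k = fls_const c * fls_X_intpow k"

lemma fls_monom_conv_shift: "fls_monom c k = fls_shift (-k) (fls_const c)"
  by (simp add: fls_monom_def fls_X_intpow_times_conv_shift)

lemma fls_monom_nth [simp]: "fls_monom c k $$ n = (if n = k then c else 0)"
  by (simp add: fls_monom_conv_shift)

lemma fls_deriv_monom [simp]: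
  "fls_deriv (fls_monom c k :: 'a::comm_ring_1 fls) = fls_monom (c * of_int k) (k - 1)"
  by (rule fls_eqI) (auto simp: algebra_simps)

lemma fls_times_monom_nth [simp]:
  fixes f :: "'a::comm_semiring_1 fls"
  shows "(f * fls_monom c k) $$ n = f $$ (n - k) * c" "(fls_monom c k * f) $$ n = c * f $$ (n - k)"
  by (simp_all add: fls_monom_conv_shift fls_shifted_times_simps)

lemma zvar_times_nth: "(zvar a * f) $$ n = a * f $$ n + f $$ (n - 1)"
  by (simp add: zvar_def distrib_right fls_X_times_conv_shift)

locale laurent_recursion =
  fixes R S :: "complex fls \<Rightarrow> complex fls \<Rightarrow> complex fls"
    and \<alpha> \<beta> :: complex
    and m11 m12 m21 m22 :: "int \<Rightarrow> complex"
  assumes R_local: "\<lbrakk>vanishes_below p (-2); vanishes_below q (-4);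
      vanishes_below p' (-2); vanishes_below q' (-4);
      vanishes_below (p' - p) L; vanishes_below (q' - q) (L - 2); j < L - 3\<rbrakk>
      \<Longrightarrow> R p' q' $$ j = R p q $$ j"
    and S_local: "\<lbrakk>vanishes_below p (-2); vanishes_below q (-4);
      vanishes_below p' (-2); vanishes_below q' (-4);
      vanishes_below (p' - p) L; vanishes_below (q' - q) (L - 2); j < L - 5\<rbrakk>
      \<Longrightarrow> S p' q' $$ j = S p q $$ j"
    and R_linear: "\<lbrakk>p $$ (-2) = \<alpha>; q $$ (-4) = \<beta>; 0 \<le> k\<rbrakk> \<Longrightarrow>
      R (p + fls_monom x k) (q + fls_monom y (k - 2)) $$ (k - 3) = R p q $$ (k - 3) + m11 k * x + m12 k * y"
    and S_linear: "\<lbrakk>p $$ (-2) = \<alpha>; q $$ (-4) = \<beta>; 0 \<le> k\<rbrakk> \<Longrightarrow>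
      S (p + fls_monom x k) (q + fls_monom y (k - 2)) $$ (k - 5) = S p q $$ (k - 5) + m21 k * x + m22 k * y"
begin

definition admissible :: "complex fls \<Rightarrow> complex fls \<Rightarrow> bool" where
  "admissible p q \<longleftrightarrow>
     vanishes_below p (-2) \<and> vanishes_below q (-4) \<and> p $$ (-2) = \<alpha> \<and> q $$ (-4) = \<beta>"

definition solves_upto :: "int \<Rightarrow> complex fls \<Rightarrow> complex fls \<Rightarrow> bool" where
  "solves_upto k p q \<longleftrightarrow> vanishes_below (R p q) (k - 3) \<and> vanishes_below (S p q) (k - 5)"

definition correction :: "int \<Rightarrow> complex fls \<times> complex fls \<Rightarrow> complex fls \<times> complex fls" where
  "correction k = (\<lambda>(p, q).
     let r = R p q $$ (k - 3); s = S p q $$ (k - 5); d = m11 k * m22 k - m12 k * m21 k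
     in (p + fls_monom ((m12 k * s - m22 k * r) / d) k,
         q + fls_monom ((m21 k * r - m11 k * s) / d) (k - 2)))"

lemma admissible_perturb:
  assumes "admissible p q" "vanishes_below (p' - p) L" "vanishes_below (q' - q) (L - 2)" "-1 \<le> L"
  shows "admissible p' q'"
  using assms by (auto simp: admissible_def vanishes_below_def)

lemma correction_step:
  assumes pq: "admissible p q" "solves_upto k p q"
    and k: "0 \<le> k" "m11 k * m22 k - m12 k * m21 k \<noteq> 0"
    and pq': "correction k (p, q) = (p', q')"
  shows "admissible p' q'" "solves_upto (k + 1) p' q'"
    and "vanishes_below (p' - p) k" "vanishes_below (q' - q) (k - 2)"
proof -
  define r s d where "r = R p q $$ (k - 3)" "s = S p q $$ (k - 5)" "d = m11 k * m22 k - m12 k * m21 k"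
  define x y where "x = (m12 k * s - m22 k * r) / d" "y = (m21 k * r - m11 k * s) / d"
  have p': "p' = p + fls_monom x k" and q': "q' = q + fls_monom y (k - 2)"
    using pq' by (simp_all add: correction_def r_s_d_def x_y_def Let_def)
  show dp: "vanishes_below (p' - p) k" and dq: "vanishes_below (q' - q) (k - 2)"
    by (simp_all add: p' q' vanishes_below_def)
  show adm: "admissible p' q'"
    using admissible_perturb[OF pq(1) dp dq] k(1) by simp
  have cramer: "r + m11 k * x + m12 k * y = 0" "s + m21 k * x + m22 k * y = 0"
    using k(2) by (simp_all add: x_y_def r_s_d_def field_simps)
  have "R p' q' $$ j = 0" if "j < k - 2" for j
  proof (cases "j < k - 3")
    case True
    then have "R p' q' $$ j = R p q $$ j"
      using pq(1) adm dp dq by (intro R_local) (auto simp: admissible_def)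
    then show ?thesis using pq(2) True by (simp add: solves_upto_def vanishes_below_def)
  next
    case False
    then have "j = k - 3" using that by simp
    then show ?thesis
      using pq(1) k(1) cramer(1) by (simp add: p' q' R_linear admissible_def r_s_d_def)
  qed
  moreover have "S p' q' $$ j = 0" if "j < k - 4" for j
  proof (cases "j < k - 5")
    case True
    then have "S p' q' $$ j = S p q $$ j"
      using pq(1) adm dp dq by (intro S_local) (auto simp: admissible_def)
    then show ?thesis using pq(2) True by (simp add: solves_upto_def vanishes_below_def)
  next
    case False
    then have "j = k - 5" using that by simp
    then show ?thesis
      using pq(1) k(1) cramer(2) by (simp add: p' q' S_linear admissible_def r_s_d_def)
  qed
  ultimately show "solves_upto (k + 1) p' q'"
    by (simp add: solves_upto_def vanishes_below_def)
qed

primrec approx :: "int \<Rightarrow> complex fls \<times> complex fls \<Rightarrow> nat \<Rightarrow> complex fls \<times> complex fls" where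
  "approx k0 pq 0 = pq"
| "approx k0 pq (Suc m) = correction (k0 + int m) (approx k0 pq m)"

theorem solution_extending:
  assumes k0: "0 \<le> k0" and det: "\<And>k. k0 \<le> k \<Longrightarrow> m11 k * m22 k - m12 k * m21 k \<noteq> 0"
    and start: "admissible P0 Q0" "solves_upto k0 P0 Q0"
  obtains p q where "R p q = 0" "S p q = 0" "admissible p q"
    "vanishes_below (p - P0) k0" "vanishes_below (q - Q0) (k0 - 2)"
proof -
  define P Q where "P m = fst (approx k0 (P0, Q0) m)" "Q m = snd (approx k0 (P0, Q0) m)" for m
  have step: "correction (k0 + int m) (P m, Q m) = (P (Suc m), Q (Suc m))" for m
    by (simp add: P_Q_def)
  have invariant: "admissible (P m) (Q m) \<and> solves_upto (k0 + int m) (P m) (Q m)" for m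
  proof (induction m)
    case 0
    then show ?case using start by (simp add: P_Q_def)
  next
    case (Suc m)
    then show ?case
      using correction_step(1,2)[OF _ _ _ det step[of m]] k0 by (simp add: ac_simps)
  qed
  have "vanishes_below (P (Suc m) - P m) (k0 + int m)"
    and "vanishes_below (Q (Suc m) - Q m) (k0 - 2 + int m)" for m
    using correction_step(3,4)[OF _ _ _ det step[of m]] invariant[of m] k0 by (simp_all add: algebra_simps)
  moreover have "vanishes_below (P m) (-2)" "vanishes_below (Q m) (-4)" for m
    using invariant[of m] by (simp_all add: admissible_def)
  ultimately obtain p q where p: "\<And>m. vanishes_below (p - P m) (k0 + int m)"
    and q: "\<And>m. vanishes_below (q - Q m) (k0 - 2 + int m)"
    by (metis stabilizing_fls_sequence_limit)
  have p0: "vanishes_below (p - P0) k0" and q0: "vanishes_below (q - Q0) (k0 - 2)"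
    using p[of 0] q[of 0] by (simp_all add: P_Q_def)
  have adm: "admissible p q"
    using admissible_perturb[OF start(1) p0 q0] k0 by simp
  have "R p q $$ j = 0 \<and> S p q $$ j = 0" for j
  proof -
    define m where "m = nat (j - k0 + 6)"
    have j: "j < k0 + int m - 5" by (simp add: m_def)
    have "R p q $$ j = R (P m) (Q m) $$ j" "S p q $$ j = S (P m) (Q m) $$ j"
      using adm invariant[of m] p[of m] q[of m] j
      by (auto simp: admissible_def algebra_simps intro!: R_local S_local)
    then show ?thesis
      using invariant[of m] j by (simp add: solves_upto_def vanishes_below_def)
  qed
  then have "R p q = 0" "S p q = 0" by (auto intro: fls_eqI)
  then show thesis using that adm p0 q0 by blast
qed

end

definition p_residual :: "complex \<Rightarrow> complex \<Rightarrow> complex fls \<Rightarrow> complex fls \<Rightarrow> complex fls" where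
  "p_residual c a p q = D (D (D p)) - (fls_const c * p * D p + 3 * D q + zvar a * D p + 2 * p)"

definition q_residual_I :: "complex \<Rightarrow> complex fls \<Rightarrow> complex fls \<Rightarrow> complex fls" where
  "q_residual_I a p q =
     D (D (D q)) - (12 * p * D q + 6 * D p * D (D p) + 3 * D (D p) + 4 * zvar a * D q - 2 * q)"

definition q_residual_II :: "complex \<Rightarrow> complex fls \<Rightarrow> complex fls \<Rightarrow> complex fls" where
  "q_residual_II a p q =
     D (D (D q)) - (12 * p * D q + 6 * D p * q + 3 * D (D p) + 4 * zvar a * D q - 2 * q)"

lemma sysI_iff_residuals: "sysI a p q \<longleftrightarrow> p_residual 6 a p q = 0 \<and> q_residual_I a p q = 0"
  by (simp add: sysI_def p_residual_def q_residual_I_def)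

lemma sysII_iff_residuals: "sysII a p q \<longleftrightarrow> p_residual 3 a p q = 0 \<and> q_residual_II a p q = 0"
  by (simp add: sysII_def p_residual_def q_residual_II_def)

lemma p_residual_nth:
  assumes "vanishes_below p (-2)"
  shows "p_residual c a p q $$ n = of_int ((n+1)*(n+2)*(n+3)) * p$$(n+3)
    - (c * (\<Sum>i=-2..n+3. p$$i * (of_int (n-i+1) * p$$(n-i+1))) + 3 * (of_int (n+1) * q$$(n+1))
       + (a * (of_int (n+1) * p$$(n+1)) + of_int n * p$$n) + 2 * p$$n)"
proof -
  have "vanishes_below (D p) (-3)" using assms by (simp add: vanishes_below_def)
  then show ?thesis
    unfolding p_residual_def
    by (simp only: mult.assoc fls_minus_nth fls_plus_nth fls_mult_of_numeral_nth fls_mult_const_nth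
      zvar_times_nth fls_times_nth_vanishes_below[OF assms] fls_deriv_nth) (simp add: algebra_simps)
qed

lemma q_residual_I_nth:
  assumes p: "vanishes_below p (-2)" and q: "vanishes_below q (-4)"
  shows "q_residual_I a p q $$ n = of_int ((n+1)*(n+2)*(n+3)) * q$$(n+3)
    - (12 * (\<Sum>i=-2..n+5. p$$i * (of_int (n-i+1) * q$$(n-i+1)))
       + 6 * (\<Sum>i=-3..n+4. (of_int (i+1) * p$$(i+1)) * (of_int ((n-i+1)*(n-i+2)) * p$$(n-i+2)))
       + 3 * (of_int ((n+1)*(n+2)) * p$$(n+2)) + 4 * (a * (of_int (n+1) * q$$(n+1)) + of_int n * q$$n)
       - 2 * q$$n)"
proof -
  have Dp: "vanishes_below (D p) (-3)" and Dq: "vanishes_below (D q) (-5)"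
    and DDp: "vanishes_below (D (D p)) (-4)"
    using p q by (simp_all add: vanishes_below_def)
  show ?thesis
    unfolding q_residual_I_def
    by (simp only: mult.assoc fls_minus_nth fls_plus_nth fls_mult_of_numeral_nth zvar_times_nth
      fls_times_nth_vanishes_below[OF p Dq] fls_times_nth_vanishes_below[OF Dp DDp] fls_deriv_nth)
      (simp add: algebra_simps)
qed

lemma q_residual_II_nth:
  assumes p: "vanishes_below p (-2)" and q: "vanishes_below q (-4)"
  shows "q_residual_II a p q $$ n = of_int ((n+1)*(n+2)*(n+3)) * q$$(n+3)
    - (12 * (\<Sum>i=-2..n+5. p$$i * (of_int (n-i+1) * q$$(n-i+1)))
       + 6 * (\<Sum>i=-3..n+4. (of_int (i+1) * p$$(i+1)) * q$$(n-i))
       + 3 * (of_int ((n+1)*(n+2)) * p$$(n+2)) + 4 * (a * (of_int (n+1) * q$$(n+1)) + of_int n * q$$n)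
       - 2 * q$$n)"
proof -
  have Dp: "vanishes_below (D p) (-3)" and Dq: "vanishes_below (D q) (-5)"
    using p q by (simp_all add: vanishes_below_def)
  show ?thesis
    unfolding q_residual_II_def
    by (simp only: mult.assoc fls_minus_nth fls_plus_nth fls_mult_of_numeral_nth zvar_times_nth
      fls_times_nth_vanishes_below[OF p Dq] fls_times_nth_vanishes_below[OF Dp q] fls_deriv_nth)
      (simp add: algebra_simps)
qed

lemma p_residual_vanishes_below:
  "vanishes_below p (-2) \<Longrightarrow> vanishes_below q (-4) \<Longrightarrow> vanishes_below (p_residual c a p q) (-5)"
  by (simp add: vanishes_below_def p_residual_nth)

lemma q_residual_I_vanishes_below:
  "vanishes_below p (-2) \<Longrightarrow> vanishes_below q (-4) \<Longrightarrow> vanishes_below (q_residual_I a p q) (-7)"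
  by (simp add: vanishes_below_def q_residual_I_nth)

lemma q_residual_II_vanishes_below:
  "vanishes_below p (-2) \<Longrightarrow> vanishes_below q (-4) \<Longrightarrow> vanishes_below (q_residual_II a p q) (-7)"
  by (simp add: vanishes_below_def q_residual_II_nth)

lemma p_residual_local:
  assumes "vanishes_below p (-2)" "vanishes_below p' (-2)"
    "vanishes_below (p' - p) L" "vanishes_below (q' - q) (L - 2)" "j < L - 3"
  shows "p_residual c a p' q' $$ j = p_residual c a p q $$ j"
proof -
  have p': "p' $$ i = p $$ i" if "i < L" for i using assms(3) that by (rule vanishes_below_diffD)
  have q': "q' $$ i = q $$ i" if "i < L - 2" for i using assms(4) that by (rule vanishes_below_diffD)
  have "(\<Sum>i=-2..j+3. p' $$ i * (of_int (j-i+1) * p' $$ (j-i+1)))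
      = (\<Sum>i=-2..j+3. p $$ i * (of_int (j-i+1) * p $$ (j-i+1)))"
    using assms(5) by (intro sum.cong) (auto simp: p')
  then show ?thesis
    using assms by (simp add: p_residual_nth p' q')
qed

lemma q_residual_I_local:
  assumes "vanishes_below p (-2)" "vanishes_below q (-4)" "vanishes_below p' (-2)" "vanishes_below q' (-4)"
    "vanishes_below (p' - p) L" "vanishes_below (q' - q) (L - 2)" "j < L - 5"
  shows "q_residual_I a p' q' $$ j = q_residual_I a p q $$ j"
proof -
  have p': "p' $$ i = p $$ i" if "i < L" for i using assms(5) that by (rule vanishes_below_diffD)
  have q': "q' $$ i = q $$ i" if "i < L - 2" for i using assms(6) that by (rule vanishes_below_diffD)
  have "(\<Sum>i=-2..j+5. p' $$ i * (of_int (j-i+1) * q' $$ (j-i+1)))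
      = (\<Sum>i=-2..j+5. p $$ i * (of_int (j-i+1) * q $$ (j-i+1)))"
    "(\<Sum>i=-3..j+4. (of_int (i+1) * p' $$ (i+1)) * (of_int ((j-i+1)*(j-i+2)) * p' $$ (j-i+2)))
      = (\<Sum>i=-3..j+4. (of_int (i+1) * p $$ (i+1)) * (of_int ((j-i+1)*(j-i+2)) * p $$ (j-i+2)))"
    using assms(7) by (auto intro!: sum.cong simp: p' q')
  then show ?thesis
    using assms by (simp add: q_residual_I_nth p' q')
qed

lemma q_residual_II_local:
  assumes "vanishes_below p (-2)" "vanishes_below q (-4)" "vanishes_below p' (-2)" "vanishes_below q' (-4)"
    "vanishes_below (p' - p) L" "vanishes_below (q' - q) (L - 2)" "j < L - 5"
  shows "q_residual_II a p' q' $$ j = q_residual_II a p q $$ j"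
proof -
  have p': "p' $$ i = p $$ i" if "i < L" for i using assms(5) that by (rule vanishes_below_diffD)
  have q': "q' $$ i = q $$ i" if "i < L - 2" for i using assms(6) that by (rule vanishes_below_diffD)
  have "(\<Sum>i=-2..j+5. p' $$ i * (of_int (j-i+1) * q' $$ (j-i+1)))
      = (\<Sum>i=-2..j+5. p $$ i * (of_int (j-i+1) * q $$ (j-i+1)))"
    "(\<Sum>i=-3..j+4. (of_int (i+1) * p' $$ (i+1)) * q' $$ (j-i))
      = (\<Sum>i=-3..j+4. (of_int (i+1) * p $$ (i+1)) * q $$ (j-i))"
    using assms(7) by (auto intro!: sum.cong simp: p' q')
  then show ?thesis
    using assms by (simp add: q_residual_II_nth p' q')
qed

lemmas residual_expansion_simps =
  fls_deriv_add distrib_left distrib_right mult.assoc fls_minus_nth fls_plus_nth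
  fls_mult_of_numeral_nth fls_mult_const_nth zvar_times_nth fls_times_monom_nth fls_monom_nth
  fls_deriv_monom fls_deriv_nth

lemma p_residual_linear:
  assumes "p $$ (-2) = \<alpha>" "0 \<le> k"
  shows "p_residual c a (p + fls_monom x k) (q + fls_monom y (k - 2)) $$ (k - 3)
    = p_residual c a p q $$ (k - 3) + (of_int (k*(k-1)*(k-2)) - c * \<alpha> * of_int (k-2)) * x
      + (- 3 * of_int (k-2)) * y"
  unfolding p_residual_def
  by (simp only: residual_expansion_simps) (use assms in \<open>simp add: algebra_simps zvar_def\<close>)

lemma q_residual_I_linear:
  assumes "p $$ (-2) = \<alpha>" "q $$ (-4) = \<beta>" "0 \<le> k"
  shows "q_residual_I a (p + fls_monom x k) (q + fls_monom y (k - 2)) $$ (k - 5)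
    = q_residual_I a p q $$ (k - 5) + (48 * \<beta> + 12 * \<alpha> * of_int (k * (k - 4))) * x
      + (of_int ((k-2)*(k-3)*(k-4)) - 12 * \<alpha> * of_int (k - 2)) * y"
  unfolding q_residual_I_def
  by (simp only: residual_expansion_simps) (use assms in \<open>simp add: algebra_simps zvar_def\<close>)

lemma q_residual_II_linear:
  assumes "p $$ (-2) = \<alpha>" "q $$ (-4) = \<beta>" "0 \<le> k"
  shows "q_residual_II a (p + fls_monom x k) (q + fls_monom y (k - 2)) $$ (k - 5)
    = q_residual_II a p q $$ (k - 5) + (48 * \<beta> - 6 * \<beta> * of_int k) * x
      + (of_int ((k-2)*(k-3)*(k-4)) - 12 * \<alpha> * of_int (k - 2) + 12 * \<alpha>) * y"
  unfolding q_residual_II_def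
  by (simp only: residual_expansion_simps) (use assms in \<open>simp add: algebra_simps zvar_def\<close>)

lemma laurent_recursion_I:
  "laurent_recursion (p_residual 6 a) (q_residual_I a) 1 1
     (\<lambda>k. of_int (k*(k-1)*(k-2) - 6*(k-2))) (\<lambda>k. of_int (-3*(k-2)))
     (\<lambda>k. of_int (48 + 12*k*(k-4))) (\<lambda>k. of_int ((k-2)*(k-3)*(k-4) - 12*(k-2)))"
  by unfold_locales
    (simp_all add: p_residual_local q_residual_I_local p_residual_linear q_residual_I_linear)

lemma laurent_recursion_II:
  "laurent_recursion (p_residual 3 a) (q_residual_II a) 2 2
     (\<lambda>k. of_int (k*(k-1)*(k-2) - 6*(k-2))) (\<lambda>k. of_int (-3*(k-2)))
     (\<lambda>k. of_int (96 - 12*k)) (\<lambda>k. of_int ((k-2)*(k-3)*(k-4) - 24*(k-2) + 24))"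
  by unfold_locales
    (simp_all add: p_residual_local q_residual_II_local p_residual_linear q_residual_II_linear)

lemma indicial_det_I:
  fixes k :: int
  assumes "7 \<le> k"
  shows "complex_of_int (k*(k-1)*(k-2) - 6*(k-2)) * of_int ((k-2)*(k-3)*(k-4) - 12*(k-2))
    - of_int (-3*(k-2)) * of_int (48 + 12*k*(k-4)) \<noteq> 0"
proof -
  have "(k*(k-1)*(k-2) - 6*(k-2)) * ((k-2)*(k-3)*(k-4) - 12*(k-2)) - (-3*(k-2)) * (48 + 12*k*(k-4))
      = (k+3) * (k-1) * ((k-2) * (k-2)) * (k-4) * (k-6)"
    by (simp add: algebra_simps)
  also have "\<dots> > 0" using assms by (simp add: mult_pos_pos)
  finally show ?thesis
    by (simp only: of_int_mult[symmetric] of_int_diff[symmetric] of_int_eq_0_iff)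
qed

lemma indicial_det_II:
  fixes k :: int
  assumes "9 \<le> k"
  shows "complex_of_int (k*(k-1)*(k-2) - 6*(k-2)) * of_int ((k-2)*(k-3)*(k-4) - 24*(k-2) + 24)
    - of_int (-3*(k-2)) * of_int (96 - 12*k) \<noteq> 0"
proof -
  have "(k*(k-1)*(k-2) - 6*(k-2)) * ((k-2)*(k-3)*(k-4) - 24*(k-2) + 24) - (-3*(k-2)) * (96 - 12*k)
      = (k+3) * k * (k-1) * (k-2) * (k-4) * (k-8)"
    by (simp add: algebra_simps)
  also have "\<dots> > 0" using assms by (simp add: mult_pos_pos)
  finally show ?thesis
    by (simp only: of_int_mult[symmetric] of_int_diff[symmetric] of_int_eq_0_iff)
qed

(* c1, ..., c5 are alpha_1, alpha_2, beta_0, alpha_4, alpha_6; the other coefficients are forced. *)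
definition trunc_p_I :: "complex \<Rightarrow> complex \<Rightarrow> complex \<Rightarrow> complex \<Rightarrow> complex \<Rightarrow> complex \<Rightarrow> complex fls" where
  "trunc_p_I a c1 c2 c3 c4 c5 =
     fls_monom 1 (-2) + fls_monom (- (1/3)*a) 0 + fls_monom c1 1 + fls_monom c2 2
     + fls_monom (- (1/18)*a - (1/3)*a*c1) 3 + fls_monom c4 4
     + fls_monom ((1/288)*a^2 + (1/48)*a^2*c1 + (3/4)*c1*c2 + (11/48)*c2 + (1/16)*c3) 5
     + fls_monom c5 6"

definition trunc_q_I :: "complex \<Rightarrow> complex \<Rightarrow> complex \<Rightarrow> complex \<Rightarrow> complex \<Rightarrow> complex \<Rightarrow> complex fls" where
  "trunc_q_I a c1 c2 c3 c4 c5 =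
     fls_monom 1 (-4) + fls_monom ((1/3)*a) (-2) + fls_monom (- 2*c1) (-1) + fls_monom c3 0
     + fls_monom ((2/9)*a + (1/3)*a*c1) 1 + fls_monom ((1/3)*a*c2 - (1/2)*c1 - c1^2 + 2*c4) 2
     + fls_monom (- (1/432)*a^2 - (1/72)*a^2*c1 + (3/2)*c1*c2 + (5/8)*c2 + (7/24)*c3) 3
     + fls_monom ((5/216)*a + (1/4)*a*c1 + (2/3)*a*c1^2 + (1/3)*a*c4 - c2^2 + 8*c5) 4"

lemma trunc_I_vanishes_below:
  "vanishes_below (trunc_p_I a c1 c2 c3 c4 c5) (-2)" "vanishes_below (trunc_q_I a c1 c2 c3 c4 c5) (-4)"
  by (simp_all add: vanishes_below_def trunc_p_I_def trunc_q_I_def)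

lemma trunc_I_residuals:
  fixes a c1 c2 c3 c4 c5 :: complex
  defines "P \<equiv> trunc_p_I a c1 c2 c3 c4 c5" and "Q \<equiv> trunc_q_I a c1 c2 c3 c4 c5"
  shows "vanishes_below (p_residual 6 a P Q) 4" "vanishes_below (q_residual_I a P Q) 2"
proof -
  note low = trunc_I_vanishes_below[of a c1 c2 c3 c4 c5, folded P_def Q_def]
  have "p_residual 6 a P Q $$ j = 0" if "j < 4" for j
  proof (cases "j < -5")
    case True
    then show ?thesis using vanishes_belowD[OF p_residual_vanishes_below[OF low]] by blast
  next
    case False
    then have "j \<in> {-5, -4, -3, -2, -1, 0, 1, 2, 3}" using that by (auto; arith)
    then show ?thesis
      by (auto simp: p_residual_nth low sum_int_interval_unroll ;
          simp add: P_def Q_def trunc_p_I_def trunc_q_I_def ;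
          simp add: field_simps power2_eq_square power3_eq_cube)
  qed
  then show "vanishes_below (p_residual 6 a P Q) 4"
    by (simp add: vanishes_below_def)
  have "q_residual_I a P Q $$ j = 0" if "j < 2" for j
  proof (cases "j < -7")
    case True
    then show ?thesis using vanishes_belowD[OF q_residual_I_vanishes_below[OF low]] by blast
  next
    case False
    then have "j \<in> {-7, -6, -5, -4, -3, -2, -1, 0, 1}" using that by (auto; arith)
    then show ?thesis
      by (auto simp: q_residual_I_nth low sum_int_interval_unroll ;
          simp add: P_def Q_def trunc_p_I_def trunc_q_I_def ;
          simp add: field_simps power2_eq_square power3_eq_cube)
  qed
  then show "vanishes_below (q_residual_I a P Q) 2"
    by (simp add: vanishes_below_def)
qed

lemma sysI_laurent_solution:
  obtains p q where "sysI a p q" "laurent_shape p q"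
    "p $$ 1 = c1" "p $$ 2 = c2" "q $$ 0 = c3" "p $$ 4 = c4" "p $$ 6 = c5"
proof -
  interpret laurent_recursion "p_residual 6 a" "q_residual_I a" 1 1
    "\<lambda>k. of_int (k*(k-1)*(k-2) - 6*(k-2))" "\<lambda>k. of_int (-3*(k-2))"
    "\<lambda>k. of_int (48 + 12*k*(k-4))" "\<lambda>k. of_int ((k-2)*(k-3)*(k-4) - 12*(k-2))"
    by (rule laurent_recursion_I)
  define P Q where "P = trunc_p_I a c1 c2 c3 c4 c5" "Q = trunc_q_I a c1 c2 c3 c4 c5"
  have adm: "admissible P Q"
    by (simp add: admissible_def P_Q_def trunc_I_vanishes_below) (simp add: trunc_p_I_def trunc_q_I_def)
  have start: "solves_upto 7 P Q"
    using trunc_I_residuals by (simp add: solves_upto_def P_Q_def)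
  obtain p q where "p_residual 6 a p q = 0" "q_residual_I a p q = 0" "admissible p q"
    and "vanishes_below (p - P) 7" "vanishes_below (q - Q) (7 - 2)"
    by (rule solution_extending[OF _ indicial_det_I adm start]) auto
  then show thesis
    by (intro that) (auto simp: sysI_iff_residuals laurent_shape_def admissible_def vanishes_below_def
        P_Q_def trunc_p_I_def trunc_q_I_def)
qed

(* c1, ..., c5 are alpha_0, alpha_1, alpha_2, alpha_4, alpha_8; the other coefficients are forced. *)
definition trunc_p_II :: "complex \<Rightarrow> complex \<Rightarrow> complex \<Rightarrow> complex \<Rightarrow> complex \<Rightarrow> complex \<Rightarrow> complex fls" where
  "trunc_p_II a c1 c2 c3 c4 c5 =
     fls_monom 2 (-2) + fls_monom c1 0 + fls_monom c2 1 + fls_monom c3 2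
     + fls_monom ((1/9)*a + (1/3)*a*c2 + (1/3)*c1 + c1*c2) 3 + fls_monom c4 4
     + fls_monom ((3/40)*a*c1 + (1/8)*a*c1*c2 + (7/720)*a^2 + (1/48)*a^2*c2 + (11/80)*c1^2
         + (3/16)*c1^2*c2 + (3/8)*c2*c3 + (1/24)*c3) 5
     + fls_monom ((1/1620)*a + (1/30)*a*c2 + (1/12)*a*c2^2 + (1/180)*c1 + (2/15)*c1*c2
         + (1/4)*c1*c2^2 + (1/6)*c3^2) 6
     + fls_monom (- (29/840)*a*c1^2 - (3/56)*a*c1^2*c2 + (3/28)*a*c2*c3 + (47/1260)*a*c3
         - (5/504)*a^2*c1 - (1/56)*a^2*c1*c2 - (1/1080)*a^3 - (1/504)*a^3*c2 + (9/28)*c1*c2*c3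
         + (3/20)*c1*c3 - (11/280)*c1^3 - (3/56)*c1^3*c2 + (1/140)*c2 + (3/70)*c2^2 + (1/28)*c2^3
         - (2/25)*c4) 7
     + fls_monom c5 8"

definition trunc_q_II :: "complex \<Rightarrow> complex \<Rightarrow> complex \<Rightarrow> complex \<Rightarrow> complex \<Rightarrow> complex \<Rightarrow> complex fls" where
  "trunc_q_II a c1 c2 c3 c4 c5 =
     fls_monom 2 (-4) + fls_monom (- (2/3)*a - 2*c1) (-2) + fls_monom (- 2*c2) (-1)
     + fls_monom ((4/3)*a*c1 + (2/9)*a^2 + 2*c1^2 - 3*c3) 0
     + fls_monom (- (1/3)*a*c2 - (2/3)*c1 - c1*c2) 1
     + fls_monom (- (1/3)*a*c3 - c1*c3 - (1/2)*c2 - (1/2)*c2^2 + 2*c4) 2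
     + fls_monom ((23/180)*a*c1 - (1/12)*a*c1*c2 + (1/120)*a^2 - (1/72)*a^2*c2 + (37/120)*c1^2
         - (1/8)*c1^2*c2 + (3/4)*c2*c3 - (1/4)*c3) 3
     + fls_monom (- (67/1620)*a + (1/60)*a*c2 + (1/3)*a*c2^2 - (1/3)*a*c4 - (17/180)*c1
         + (19/60)*c1*c2 + c1*c2^2 - c1*c4 + (5/6)*c3^2) 4
     + fls_monom (- (899/1680)*a*c1^2 - (93/112)*a*c1^2*c2 + (139/168)*a*c2*c3 + (271/840)*a*c3
         - (155/1008)*a^2*c1 - (31/112)*a^2*c1*c2 - (31/2160)*a^3 - (31/1008)*a^3*c2
         + (139/56)*c1*c2*c3 + (57/40)*c1*c3 - (341/560)*c1^3 - (93/112)*c1^3*c2 + (3/35)*c2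
         - c2*c4 + (18/35)*c2^2 + (3/7)*c2^3 - (34/25)*c4) 5
     + fls_monom (- (89/1296)*a*c1 - (61/144)*a*c1*c2 - (5/8)*a*c1*c2^2 - (1/18)*a*c3^2
         - (79/7776)*a^2 - (19/288)*a^2*c2 - (5/48)*a^2*c2^2 - (1/6)*c1*c3^2 - (11/96)*c1^2
         - (65/96)*c1^2*c2 - (15/16)*c1^2*c2^2 - (3/16)*c2*c3 - (3/8)*c2^2*c3 - (7/432)*c3 - c3*c4
         + (50/3)*c5) 6"

lemma trunc_II_vanishes_below:
  "vanishes_below (trunc_p_II a c1 c2 c3 c4 c5) (-2)" "vanishes_below (trunc_q_II a c1 c2 c3 c4 c5) (-4)"
  by (simp_all add: vanishes_below_def trunc_p_II_def trunc_q_II_def)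

lemma trunc_II_residuals:
  fixes a c1 c2 c3 c4 c5 :: complex
  defines "P \<equiv> trunc_p_II a c1 c2 c3 c4 c5" and "Q \<equiv> trunc_q_II a c1 c2 c3 c4 c5"
  shows "vanishes_below (p_residual 3 a P Q) 6" "vanishes_below (q_residual_II a P Q) 4"
proof -
  note low = trunc_II_vanishes_below[of a c1 c2 c3 c4 c5, folded P_def Q_def]
  have "p_residual 3 a P Q $$ j = 0" if "j < 6" for j
  proof (cases "j < -5")
    case True
    then show ?thesis using vanishes_belowD[OF p_residual_vanishes_below[OF low]] by blast
  next
    case False
    then have "j \<in> {-5, -4, -3, -2, -1, 0, 1, 2, 3, 4, 5}" using that by (auto; arith)
    then show ?thesis
      by (auto simp: p_residual_nth low sum_int_interval_unroll ;
          simp add: P_def Q_def trunc_p_II_def trunc_q_II_def ;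
          simp add: field_simps power2_eq_square power3_eq_cube)
  qed
  then show "vanishes_below (p_residual 3 a P Q) 6"
    by (simp add: vanishes_below_def)
  have "q_residual_II a P Q $$ j = 0" if "j < 4" for j
  proof (cases "j < -7")
    case True
    then show ?thesis using vanishes_belowD[OF q_residual_II_vanishes_below[OF low]] by blast
  next
    case False
    then have "j \<in> {-7, -6, -5, -4, -3, -2, -1, 0, 1, 2, 3}" using that by (auto; arith)
    then show ?thesis
      by (auto simp: q_residual_II_nth low sum_int_interval_unroll ;
          simp add: P_def Q_def trunc_p_II_def trunc_q_II_def ;
          simp add: field_simps power2_eq_square power3_eq_cube)
  qed
  then show "vanishes_below (q_residual_II a P Q) 4"
    by (simp add: vanishes_below_def)
qed

lemma sysII_laurent_solution:
  obtains p q where "sysII a p q" "laurent_shape p q"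
    "p $$ 0 = c1" "p $$ 1 = c2" "p $$ 2 = c3" "p $$ 4 = c4" "p $$ 8 = c5"
proof -
  interpret laurent_recursion "p_residual 3 a" "q_residual_II a" 2 2
    "\<lambda>k. of_int (k*(k-1)*(k-2) - 6*(k-2))" "\<lambda>k. of_int (-3*(k-2))"
    "\<lambda>k. of_int (96 - 12*k)" "\<lambda>k. of_int ((k-2)*(k-3)*(k-4) - 24*(k-2) + 24)"
    by (rule laurent_recursion_II)
  define P Q where "P = trunc_p_II a c1 c2 c3 c4 c5" "Q = trunc_q_II a c1 c2 c3 c4 c5"
  have adm: "admissible P Q"
    by (simp add: admissible_def P_Q_def trunc_II_vanishes_below) (simp add: trunc_p_II_def trunc_q_II_def)
  have start: "solves_upto 9 P Q"
    using trunc_II_residuals by (simp add: solves_upto_def P_Q_def)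
  obtain p q where "p_residual 3 a p q = 0" "q_residual_II a p q = 0" "admissible p q"
    and "vanishes_below (p - P) 9" "vanishes_below (q - Q) (9 - 2)"
    by (rule solution_extending[OF _ indicial_det_II adm start]) auto
  then show thesis
    by (intro that) (auto simp: sysII_iff_residuals laurent_shape_def admissible_def vanishes_below_def
        P_Q_def trunc_p_II_def trunc_q_II_def)
qed

lemma six_param_laurentI:
  assumes "length ks = 5" "distinct ks"
    and "\<And>a c1 c2 c3 c4 c5. \<exists>p q. S a p q \<and> laurent_shape p q
           \<and> map (coeff_at p q) ks = [c1, c2, c3, c4, c5]"
  shows "six_param_laurent S"
  unfolding six_param_laurent_def
proof (intro exI[of _ ks] conjI allI impI)
  fix a and cs :: "complex list"
  assume "length cs = 5"
  then obtain c1 c2 c3 c4 c5 where "cs = [c1, c2, c3, c4, c5]"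
    by (auto simp: length_Suc_conv numeral_eq_Suc)
  then obtain p q where "S a p q" "laurent_shape p q" "map (coeff_at p q) ks = cs"
    using assms(3)[of a c1 c2 c3 c4 c5] by metis
  then show "\<exists>p q. S a p q \<and> laurent_shape p q \<and> (\<forall>j<5. coeff_at p q (ks ! j) = cs ! j)"
    using assms(1) by (metis nth_map)
qed (use assms in auto)

theorem proposition2:
  shows "six_param_laurent sysI \<and> six_param_laurent sysII"
proof
  show "six_param_laurent sysI"
  proof (rule six_param_laurentI[of "[(True, 1), (True, 2), (False, 0), (True, 4), (True, 6)]"])
    fix a c1 c2 c3 c4 c5
    obtain p q where "sysI a p q" "laurent_shape p q"
      "p $$ 1 = c1" "p $$ 2 = c2" "q $$ 0 = c3" "p $$ 4 = c4" "p $$ 6 = c5"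
      by (rule sysI_laurent_solution)
    then show "\<exists>p q. sysI a p q \<and> laurent_shape p q
        \<and> map (coeff_at p q) [(True, 1), (True, 2), (False, 0), (True, 4), (True, 6)] = [c1, c2, c3, c4, c5]"
      by (auto simp: coeff_at_def)
  qed simp_all
  show "six_param_laurent sysII"
  proof (rule six_param_laurentI[of "[(True, 0), (True, 1), (True, 2), (True, 4), (True, 8)]"])
    fix a c1 c2 c3 c4 c5
    obtain p q where "sysII a p q" "laurent_shape p q"
      "p $$ 0 = c1" "p $$ 1 = c2" "p $$ 2 = c3" "p $$ 4 = c4" "p $$ 8 = c5"
      by (rule sysII_laurent_solution)
    then show "\<exists>p q. sysII a p q \<and> laurent_shape p q
        \<and> map (coeff_at p q) [(True, 0), (True, 1), (True, 2), (True, 4), (True, 8)] = [c1, c2, c3, c4, c5]"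
      by (auto simp: coeff_at_def)
  qed simp_all
qed

end
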